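(* Each of the following eight functions on $TN$ is a smooth first integral of the geodesic flow of $(N,g)$ and is invariant under the left action of $\Gamma$ on $TN$ (hence descends to a first integral of the geodesic flow on $(\Gamma\backslash N,g)$): for a point $((v,z),V+Z)\in TN\cong N\times\mathfrak n$ with $V\in\mathfrak v$, $Z\in\mathfrak z$, $q^W((v,z),V+Z)=\langle Z,W\rangle$ for $W\in\{Z_i,Z_j,Z_k\}$; $h_1=\langle V,E_1(Z)\rangle^2+\langle V,E_2(Z)\rangle^2$; $h_2=\langle V,E_3(Z)\rangle^2+\langle V,E_4(Z)\rangle^2$; $k=\langle V,Y(Z)\rangle$; and for $X\in\{X_i,X_j\}$, $f^X((v,z),V+Z)=0$ if $Z=Z_c$ with $c_k=0$, and $f^X((v,z),V+Z)=\Phi(Z)\sin\bigl(2\pi\langle X,v_{\mathfrak x}-C(Z)V_{\mathfrak y}\rangle\bigr)$ otherwise.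
   Context: Let $\mathfrak v$ have orthonormal basis $X_i,X_j,Y_i,Y_j,Y_k$, $\mathfrak z$ orthonormal basis $Z_i,Z_j,Z_k$, $\mathfrak n=\mathfrak v\oplus\mathfrak z$ orthogonal, with two-step nilpotent bracket ($\mathfrak z$ central, $[\mathfrak v,\mathfrak v]\subseteq\mathfrak z$) whose only nonzero basis brackets up to antisymmetry are $[X_i,Y_j]=Z_k$, $[X_i,Y_k]=-Z_j$, $[X_j,Y_i]=-Z_k$, $[X_j,Y_k]=Z_i$. Define $j:\mathfrak z\to\mathfrak{so}(\mathfrak v)$ by $\langle j(Z)X,Y\rangle=\langle Z,[X,Y]\rangle$. $N$ is the simply connected Lie group with Lie algebra $\mathfrak n$, $g$ the left invariant metric from the inner product, $\Gamma=\exp(\mathrm{span}_{\mathbb Z}\{X_i,X_j,Y_i,Y_j,Y_k,\tfrac12Z_i,\tfrac12Z_j,\tfrac12Z_k\})$. Elements of $N$ are written $(v,z):=\exp(v+z)$, $v\in\mathfrak v$, $z\in\mathfrak z$, so $(v,z)(\bar v,\bar z)=(v+\bar v,z+\bar z+\tfrac12[v,\bar v])$; $TN$ is identified with $N\times\mathfrak n$ by left translation ($X\in T_pN\mapsto(p,L_{p*}^{-1}X)$). Let $\mathfrak x=\mathrm{span}\{X_i,X_j\}$, $\mathfrak y=\mathrm{span}\{Y_i,Y_j,Y_k\}$, and $V_{\mathfrak x},V_{\mathfrak y}$ the components of $V\in\mathfrak v$. For $Z=Z_c=c_iZ_i+c_jZ_j+c_kZ_k$: $E_1(Z)=c_iX_i+c_jX_j$,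 $E_2(Z)=-c_jY_i+c_iY_j$, $E_3(Z)=|c|(c_jX_i-c_iX_j)$, $E_4(Z)=c_k(c_iY_i+c_jY_j)-(c_i^2+c_j^2)Y_k$, $Y(Z)=c_iY_i+c_jY_j+c_kY_k$. For $c_k\neq0$, $C(Z):\mathfrak y\to\mathfrak x$ is the linear map with matrix (w.r.t. bases $(Y_i,Y_j,Y_k)$ and $(X_i,X_j)$) $(c_k|c|^2)^{-1}\begin{pmatrix}-c_ic_j & c_i^2+c_k^2 & -c_jc_k\\ -c_j^2-c_k^2 & c_ic_j & c_ic_k\end{pmatrix}$. Let $\phi(x)=e^{-1/x^2}$ for $x\neq0$, $\phi(0)=0$, and $\Phi(Z_c)=\phi(c_k|c|^2)$. *)

theory Defs
  imports "HOL-Analysis.Analysis"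
begin

text \<open>The Lie algebra n = v + z is modelled as real^8 with the standard
 (orthonormal) basis, ordered X_i, X_j, Y_i, Y_j, Y_k, Z_i, Z_j, Z_k (indices 0..7).
 Following the paper, N is identified with n via (v,z) = exp(v+z); the group law is
 (v,z)(v',z') = (v+v', z+z'+1/2[v,v']).  TN is identified with N x n by left translation.\<close>

definition Xi :: "real^8" where "Xi = axis 0 1"
definition Xj :: "real^8" where "Xj = axis 1 1"
definition Yi :: "real^8" where "Yi = axis 2 1"
definition Yj :: "real^8" where "Yj = axis 3 1"
definition Yk :: "real^8" where "Yk = axis 4 1"
definition Zi :: "real^8" where "Zi = axis 5 1"
definition Zj :: "real^8" where "Zj = axis 6 1"
definition Zk :: "real^8" where "Zk = axis 7 1"

definition vpart :: "real^8 \<Rightarrow> real^8" where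
  "vpart x = x$0 *\<^sub>R Xi + x$1 *\<^sub>R Xj + x$2 *\<^sub>R Yi + x$3 *\<^sub>R Yj + x$4 *\<^sub>R Yk"
definition zpart :: "real^8 \<Rightarrow> real^8" where
  "zpart x = x$5 *\<^sub>R Zi + x$6 *\<^sub>R Zj + x$7 *\<^sub>R Zk"
definition xpart :: "real^8 \<Rightarrow> real^8" where
  "xpart x = x$0 *\<^sub>R Xi + x$1 *\<^sub>R Xj"
definition ypart :: "real^8 \<Rightarrow> real^8" where
  "ypart x = x$2 *\<^sub>R Yi + x$3 *\<^sub>R Yj + x$4 *\<^sub>R Yk"

definition brk :: "real^8 \<Rightarrow> real^8 \<Rightarrow> real^8" where
  "brk x y = (x$0 * y$3 - x$3 * y$0) *\<^sub>R Zk - (x$0 * y$4 - x$4 * y$0) *\<^sub>R Zj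
           - (x$1 * y$2 - x$2 * y$1) *\<^sub>R Zk + (x$1 * y$4 - x$4 * y$1) *\<^sub>R Zi"

definition nmult :: "real^8 \<Rightarrow> real^8 \<Rightarrow> real^8" where
  "nmult p q = p + q + (1/2) *\<^sub>R brk p q"

definition Lstar :: "real^8 \<Rightarrow> real^8 \<Rightarrow> real^8" where
  "Lstar p X = X + (1/2) *\<^sub>R brk p X"
definition Linv :: "real^8 \<Rightarrow> real^8 \<Rightarrow> real^8" where
  "Linv p Y = Y - (1/2) *\<^sub>R brk p Y"

definition Gamma :: "(real^8) set" where
  "Gamma = {of_int a *\<^sub>R Xi + of_int b *\<^sub>R Xj + of_int c *\<^sub>R Yi + of_int d *\<^sub>R Yj
            + of_int e *\<^sub>R Yk + of_int f *\<^sub>R ((1/2) *\<^sub>R Zi) + of_int g *\<^sub>R ((1/2) *\<^sub>R Zj)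
            + of_int h *\<^sub>R ((1/2) *\<^sub>R Zk) | a b c d e f g h. True}"

text \<open>Left-invariant metric in the global coordinates: g_p(A,B) = <L_p*^{-1}A, L_p*^{-1}B>.\<close>
definition gco :: "real^8 \<Rightarrow> 8 \<Rightarrow> 8 \<Rightarrow> real" where
  "gco p k l = Linv p (axis k 1) \<bullet> Linv p (axis l 1)"

definition pdiff :: "(real^8 \<Rightarrow> real) \<Rightarrow> 8 \<Rightarrow> real^8 \<Rightarrow> real" where
  "pdiff h i p = deriv (\<lambda>s. h (p + s *\<^sub>R axis i 1)) 0"

definition chr1 :: "real^8 \<Rightarrow> 8 \<Rightarrow> 8 \<Rightarrow> 8 \<Rightarrow> real" where
  "chr1 p i j k = (pdiff (\<lambda>q. gco q j k) i p + pdiff (\<lambda>q. gco q i k) j p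
                   - pdiff (\<lambda>q. gco q i j) k p) / 2"

definition geodesic ::
  "(real \<Rightarrow> real^8) \<Rightarrow> (real \<Rightarrow> real^8) \<Rightarrow> real \<Rightarrow> real \<Rightarrow> bool" where
  "geodesic \<gamma> \<gamma>' a b \<longleftrightarrow> (\<exists>\<gamma>''. \<forall>t\<in>{a<..<b}.
      (\<gamma> has_vector_derivative \<gamma>' t) (at t) \<and>
      (\<gamma>' has_vector_derivative \<gamma>'' t) (at t) \<and>
      (\<forall>k. (\<Sum>l\<in>UNIV. gco (\<gamma> t) k l * \<gamma>'' t $ l)
           + (\<Sum>i\<in>UNIV. \<Sum>j\<in>UNIV. chr1 (\<gamma> t) i j k * \<gamma>' t $ i * \<gamma>' t $ j) = 0))"

definition first_integral :: "((real^8) \<times> (real^8) \<Rightarrow> real) \<Rightarrow> bool" where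
  "first_integral F \<longleftrightarrow> (\<forall>\<gamma> \<gamma>' a b. geodesic \<gamma> \<gamma>' a b \<longrightarrow>
     (\<forall>s\<in>{a<..<b}. \<forall>t\<in>{a<..<b}.
        F (\<gamma> s, Linv (\<gamma> s) (\<gamma>' s)) = F (\<gamma> t, Linv (\<gamma> t) (\<gamma>' t))))"

definition Gamma_invariant :: "((real^8) \<times> (real^8) \<Rightarrow> real) \<Rightarrow> bool" where
  "Gamma_invariant F \<longleftrightarrow> (\<forall>\<gamma>\<in>Gamma. \<forall>p X. F (nmult \<gamma> p, X) = F (p, X))"

primrec Ck :: "nat \<Rightarrow> ('a::euclidean_space \<Rightarrow> real) \<Rightarrow> bool" where
  "Ck 0 f = continuous_on UNIV f"
| "Ck (Suc n) f = (f differentiable_on UNIV \<and>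
      (\<forall>b\<in>Basis. Ck n (\<lambda>x. frechet_derivative f (at x) b)))"

definition smooth :: "('a::euclidean_space \<Rightarrow> real) \<Rightarrow> bool" where
  "smooth f \<longleftrightarrow> (\<forall>n. Ck n f)"

definition ci :: "real^8 \<Rightarrow> real" where "ci Z = Z \<bullet> Zi"
definition cj :: "real^8 \<Rightarrow> real" where "cj Z = Z \<bullet> Zj"
definition ck :: "real^8 \<Rightarrow> real" where "ck Z = Z \<bullet> Zk"
definition cabs :: "real^8 \<Rightarrow> real" where
  "cabs Z = sqrt ((ci Z)^2 + (cj Z)^2 + (ck Z)^2)"

definition E1 :: "real^8 \<Rightarrow> real^8" where "E1 Z = ci Z *\<^sub>R Xi + cj Z *\<^sub>R Xj"
definition E2 :: "real^8 \<Rightarrow> real^8" where "E2 Z = (- cj Z) *\<^sub>R Yi + ci Z *\<^sub>R Yj"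
definition E3 :: "real^8 \<Rightarrow> real^8" where
  "E3 Z = cabs Z *\<^sub>R (cj Z *\<^sub>R Xi - ci Z *\<^sub>R Xj)"
definition E4 :: "real^8 \<Rightarrow> real^8" where
  "E4 Z = ck Z *\<^sub>R (ci Z *\<^sub>R Yi + cj Z *\<^sub>R Yj) - ((ci Z)^2 + (cj Z)^2) *\<^sub>R Yk"
definition YZ :: "real^8 \<Rightarrow> real^8" where
  "YZ Z = ci Z *\<^sub>R Yi + cj Z *\<^sub>R Yj + ck Z *\<^sub>R Yk"

text \<open>C(Z) : y -> x (for c_k \<noteq> 0), given by its matrix w.r.t. (Y_i,Y_j,Y_k), (X_i,X_j)\<close>
definition CZ :: "real^8 \<Rightarrow> real^8 \<Rightarrow> real^8" where
  "CZ Z W = (let a = ci Z; b = cj Z; c = ck Z; d = c * (cabs Z)^2;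
                 y1 = W \<bullet> Yi; y2 = W \<bullet> Yj; y3 = W \<bullet> Yk in
     (((- a) * b * y1 + (a^2 + c^2) * y2 - b * c * y3) / d) *\<^sub>R Xi
   + (((- (b^2) - c^2) * y1 + a * b * y2 + a * c * y3) / d) *\<^sub>R Xj)"

definition phi :: "real \<Rightarrow> real" where
  "phi x = (if x = 0 then 0 else exp (- 1 / x^2))"
definition Phi :: "real^8 \<Rightarrow> real" where
  "Phi Z = phi (ck Z * (cabs Z)^2)"

definition qW :: "real^8 \<Rightarrow> (real^8) \<times> (real^8) \<Rightarrow> real" where
  "qW W = (\<lambda>(p, A). zpart A \<bullet> W)"
definition h1 :: "(real^8) \<times> (real^8) \<Rightarrow> real" where
  "h1 = (\<lambda>(p, A). (vpart A \<bullet> E1 (zpart A))^2 + (vpart A \<bullet> E2 (zpart A))^2)"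
definition h2 :: "(real^8) \<times> (real^8) \<Rightarrow> real" where
  "h2 = (\<lambda>(p, A). (vpart A \<bullet> E3 (zpart A))^2 + (vpart A \<bullet> E4 (zpart A))^2)"
definition kfun :: "(real^8) \<times> (real^8) \<Rightarrow> real" where
  "kfun = (\<lambda>(p, A). vpart A \<bullet> YZ (zpart A))"
definition fX :: "real^8 \<Rightarrow> (real^8) \<times> (real^8) \<Rightarrow> real" where
  "fX X = (\<lambda>(p, A). (let Z = zpart A; V = vpart A; v = vpart p in
      if ck Z = 0 then 0
      else Phi Z * sin (2 * pi * (X \<bullet> (xpart v - CZ Z (ypart V))))))"

end

theory Submission
  imports Defs
begin

text \<open>In the left trivialization \<open>W = (V, Z)\<close> of the velocity, the geodesic equation of the
  left-invariant metric is the Euler equation \<open>V' = j(Z) V\<close>, \<open>Z' = 0\<close>, while the base point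
  moves by \<open>v' = V\<close>. So \<open>q\<^sup>W\<close> is constant, and \<open>h\<^sub>1\<close>, \<open>h\<^sub>2\<close>, \<open>k\<close> are polynomial invariants of the
  linear flow \<open>V' = j(Z) V\<close>. For \<open>f\<^sup>X\<close>, \<open>Z\<close> is frozen along a geodesic and \<open>C(Z)\<close> inverts \<open>j(Z)\<close>
  from \<open>x\<close> to \<open>y\<close>, so \<open>v\<^sub>x - C(Z) V\<^sub>y\<close> is constant. \<open>\<Gamma>\<close> shifts \<open>v\<^sub>x\<close> by integer vectors, which
  the period of \<open>sin (2\<pi> \<cdot>)\<close> absorbs. Finally \<open>f\<^sup>X\<close> is smooth across \<open>c\<^sub>k = 0\<close> because all its
  derivatives have the form \<open>\<phi>(u) (P sin \<theta> + R cos \<theta>) / u\<^sup>m\<close> with polynomials \<open>u, P, R\<close>,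
  and the flatness of \<open>\<phi>\<close> makes such functions vanish to second order where \<open>u = 0\<close>.\<close>

section \<open>Coordinates\<close>

lemma UNIV_8: "(UNIV::8 set) = {0,1,2,3,4,5,6,7}"
  by (rule card_subset_eq[symmetric]) simp_all

lemma sum_UNIV_8: "(\<Sum>i\<in>UNIV. f i) = f (0::8) + f 1 + f 2 + f 3 + f 4 + f 5 + f 6 + f 7"
  unfolding UNIV_8 by (simp add: add.assoc)

lemma inner_vec8:
  "(x::real^8) \<bullet> y = x$0*y$0 + x$1*y$1 + x$2*y$2 + x$3*y$3 + x$4*y$4 + x$5*y$5 + x$6*y$6 + x$7*y$7"
  by (simp only: inner_vec_def sum_UNIV_8 inner_real_def)

lemma exhaust_8: "(i::8) = 0 \<or> i = 1 \<or> i = 2 \<or> i = 3 \<or> i = 4 \<or> i = 5 \<or> i = 6 \<or> i = 7"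
  using UNIV_I[of i] unfolding UNIV_8 by blast

lemma brk_nth: "brk x y $ i =
   (if i = 5 then x$1*y$4 - x$4*y$1 else if i = 6 then x$4*y$0 - x$0*y$4
    else if i = 7 then x$0*y$3 - x$3*y$0 - x$1*y$2 + x$2*y$1 else 0)"
  by (simp add: brk_def Zi_def Zj_def Zk_def axis_def)

lemma brk_add_left: "brk (x + y) z = brk x z + brk y z"
  and brk_add_right: "brk x (y + z) = brk x y + brk x z"
  and brk_scaleR_left: "brk (c *\<^sub>R x) z = c *\<^sub>R brk x z"
  and brk_scaleR_right: "brk x (c *\<^sub>R z) = c *\<^sub>R brk x z"
  and brk_antisym: "brk x y = - brk y x"
  and brk_self: "brk x x = 0"
  by (simp_all add: vec_eq_iff brk_nth algebra_simps)

lemma bounded_bilinear_brk: "bounded_bilinear brk"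
  unfolding bilinear_conv_bounded_bilinear[symmetric] bilinear_def
  by (auto intro!: linearI simp: brk_add_left brk_add_right brk_scaleR_left brk_scaleR_right)

lemmas basis_defs = Xi_def Xj_def Yi_def Yj_def Yk_def Zi_def Zj_def Zk_def

lemma vpart_nth: "vpart x $ i = (if i \<in> {5,6,7} then 0 else x $ i)"
  and zpart_nth: "zpart x $ i = (if i \<in> {5,6,7} then x $ i else 0)"
  and xpart_nth: "xpart x $ i = (if i \<in> {0,1} then x $ i else 0)"
  and ypart_nth: "ypart x $ i = (if i \<in> {2,3,4} then x $ i else 0)"
  using exhaust_8[of i]
  by (auto simp: vpart_def zpart_def xpart_def ypart_def basis_defs axis_def)

lemma linear_vpart: "linear vpart"
  and linear_zpart: "linear zpart"
  and linear_xpart: "linear xpart"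
  and linear_ypart: "linear ypart"
  by (auto intro!: linearI simp: vec_eq_iff vpart_nth zpart_nth xpart_nth ypart_nth)

lemma inner_basis:
  "x \<bullet> Xi = x$0" "x \<bullet> Xj = x$1" "x \<bullet> Yi = x$2" "x \<bullet> Yj = x$3" "x \<bullet> Yk = x$4"
  "x \<bullet> Zi = x$5" "x \<bullet> Zj = x$6" "x \<bullet> Zk = x$7"
  by (simp_all add: basis_defs inner_axis)

lemma c_zpart: "ci (zpart A) = A$5" "cj (zpart A) = A$6" "ck (zpart A) = A$7"
  by (simp_all add: ci_def cj_def ck_def inner_basis zpart_nth)

lemma cabs_squared: "(cabs Z)\<^sup>2 = (ci Z)\<^sup>2 + (cj Z)\<^sup>2 + (ck Z)\<^sup>2"
  by (simp add: cabs_def)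

lemma Linv_nth: "Linv p x $ i = x $ i - brk p x $ i / 2"
  by (simp add: Linv_def)

lemma Linv_add: "Linv p (x + y) = Linv p x + Linv p y"
  and Linv_scaleR: "Linv p (c *\<^sub>R x) = c *\<^sub>R Linv p x"
  by (simp_all add: Linv_def brk_add_right brk_scaleR_right algebra_simps)

lemma Linv_translate: "Linv (p + s *\<^sub>R q) y = Linv p y - (s/2) *\<^sub>R brk q y"
  by (simp add: Linv_def brk_add_left brk_scaleR_left algebra_simps)

lemma xpart_vpart: "xpart (vpart x) = xpart x"
  and ypart_vpart: "ypart (vpart x) = ypart x"
  and vpart_Linv: "vpart (Linv p x) = vpart x"
  by (auto simp: vec_eq_iff vpart_nth xpart_nth ypart_nth Linv_nth brk_nth)

section \<open>The geodesic equation in the left trivialization\<close>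

lemma linear_sum_components:
  fixes f :: "real^'n \<Rightarrow> real"
  assumes "linear f"
  shows "(\<Sum>i\<in>UNIV. x$i * f (axis i 1)) = f x"
proof -
  have "f x = f (\<Sum>i\<in>UNIV. x $ i *\<^sub>R axis i 1)"
    by (metis basis_expansion scalar_mult_eq_scaleR)
  also have "\<dots> = (\<Sum>i\<in>UNIV. x$i * f (axis i 1))"
    using assms by (simp add: linear_sum linear_scale)
  finally show ?thesis by simp
qed

lemma bilinear_sum_components:
  fixes B :: "real^'n \<Rightarrow> real^'n \<Rightarrow> real"
  assumes "\<And>v. linear (\<lambda>u. B u v)" "\<And>u. linear (\<lambda>v. B u v)"
  shows "(\<Sum>i\<in>UNIV. \<Sum>j\<in>UNIV. B (axis i 1) (axis j 1) * x$i * x$j) = B x x"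
proof -
  have "(\<Sum>i\<in>UNIV. \<Sum>j\<in>UNIV. B (axis i 1) (axis j 1) * x$i * x$j)
      = (\<Sum>i\<in>UNIV. x$i * (\<Sum>j\<in>UNIV. x$j * B (axis i 1) (axis j 1)))"
    by (simp add: sum_distrib_left algebra_simps)
  also have "\<dots> = (\<Sum>i\<in>UNIV. x$i * B (axis i 1) x)"
    using linear_sum_components[OF assms(2)] by simp
  also have "\<dots> = B x x"
    using linear_sum_components[OF assms(1)] by simp
  finally show ?thesis .
qed

lemma pdiff_gco: "pdiff (\<lambda>q. gco q j k) i p =
   - (brk (axis i 1) (axis j 1) \<bullet> Linv p (axis k 1) + Linv p (axis j 1) \<bullet> brk (axis i 1) (axis k 1)) / 2"
proof -
  define A B P Q where "A = Linv p (axis j 1)" and "B = Linv p (axis k 1)"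
    and "P = brk (axis i 1) (axis j 1)" and "Q = brk (axis i 1) (axis k 1)"
  have "(\<lambda>s. gco (p + s *\<^sub>R axis i 1) j k)
      = (\<lambda>s. A \<bullet> B - s * ((P \<bullet> B + A \<bullet> Q) / 2) + s\<^sup>2 * (P \<bullet> Q / 4))"
  proof
    fix s
    have "gco (p + s *\<^sub>R axis i 1) j k = (A - (s/2) *\<^sub>R P) \<bullet> (B - (s/2) *\<^sub>R Q)"
      by (simp only: gco_def Linv_translate A_def B_def P_def Q_def)
    then show "gco (p + s *\<^sub>R axis i 1) j k = A \<bullet> B - s * ((P \<bullet> B + A \<bullet> Q) / 2) + s\<^sup>2 * (P \<bullet> Q / 4)"
      by (simp add: inner_diff_left inner_diff_right power2_eq_square inner_commute[of P B] field_simps)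
  qed
  moreover have "((\<lambda>s. A \<bullet> B - s * ((P \<bullet> B + A \<bullet> Q) / 2) + s\<^sup>2 * (P \<bullet> Q / 4))
      has_real_derivative - ((P \<bullet> B + A \<bullet> Q) / 2)) (at 0)"
    by (auto intro!: derivative_eq_intros)
  ultimately have "pdiff (\<lambda>q. gco q j k) i p = - ((P \<bullet> B + A \<bullet> Q) / 2)"
    unfolding pdiff_def by (simp add: DERIV_imp_deriv)
  then show ?thesis by (simp add: A_def B_def P_def Q_def field_simps)
qed

definition christoffel_form :: "real^8 \<Rightarrow> 8 \<Rightarrow> real^8 \<Rightarrow> real^8 \<Rightarrow> real" where
  "christoffel_form p k u v =
     (- (brk u v \<bullet> Linv p (axis k 1) + Linv p v \<bullet> brk u (axis k 1))
      - (brk v u \<bullet> Linv p (axis k 1) + Linv p u \<bullet> brk v (axis k 1))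
      + (brk (axis k 1) u \<bullet> Linv p v + Linv p u \<bullet> brk (axis k 1) v)) / 4"

lemma chr1_eq_christoffel_form: "chr1 p i j k = christoffel_form p k (axis i 1) (axis j 1)"
  by (simp add: chr1_def pdiff_gco christoffel_form_def field_simps)

lemma linear_christoffel_form:
  "linear (\<lambda>u. christoffel_form p k u v)" "linear (\<lambda>v. christoffel_form p k u v)"
  by (auto intro!: linearI simp: christoffel_form_def Linv_add Linv_scaleR brk_add_left brk_add_right
      brk_scaleR_left brk_scaleR_right inner_add_left inner_add_right field_simps)

lemma christoffel_form_diag: "christoffel_form p k x x = - (Linv p x \<bullet> brk x (axis k 1))"
  using brk_antisym[of "axis k 1" x]
  by (simp add: christoffel_form_def brk_self inner_commute[of "brk x (axis k 1)"])

lemma geodesic_equation_left_trivialized: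
  "(\<Sum>l\<in>UNIV. gco p k l * y $ l) + (\<Sum>i\<in>UNIV. \<Sum>j\<in>UNIV. chr1 p i j k * x $ i * x $ j)
   = Linv p (axis k 1) \<bullet> Linv p y - Linv p x \<bullet> brk x (axis k 1)"
proof -
  have "linear (\<lambda>v. Linv p (axis k 1) \<bullet> Linv p v)"
    by (auto intro!: linearI simp: Linv_add Linv_scaleR inner_add_right)
  then have "(\<Sum>l\<in>UNIV. gco p k l * y $ l) = Linv p (axis k 1) \<bullet> Linv p y"
    using linear_sum_components by (simp add: gco_def mult.commute)
  moreover have "(\<Sum>i\<in>UNIV. \<Sum>j\<in>UNIV. chr1 p i j k * x $ i * x $ j) = christoffel_form p k x x"
    unfolding chr1_eq_christoffel_form by (rule bilinear_sum_components[OF linear_christoffel_form])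
  ultimately show ?thesis by (simp add: christoffel_form_diag)
qed

text \<open>The paper's \<open>j(Z)V\<close>, defined by \<open>\<langle>j(Z)V, e\<^sub>k\<rangle> = \<langle>Z, [V, e\<^sub>k]\<rangle>\<close>; only the
  \<open>z\<close>-part of \<open>Z\<close> and the \<open>v\<close>-part of \<open>V\<close> matter.\<close>
definition jmap :: "real^8 \<Rightarrow> real^8 \<Rightarrow> real^8" where
  "jmap Z V = (\<chi> k. Z \<bullet> brk V (axis k 1))"

lemma jmap_nth:
  "jmap Z V $ 0 = Z$6 * V$4 - Z$7 * V$3" "jmap Z V $ 1 = Z$7 * V$2 - Z$5 * V$4"
  "jmap Z V $ 2 = - Z$7 * V$1" "jmap Z V $ 3 = Z$7 * V$0" "jmap Z V $ 4 = Z$5 * V$1 - Z$6 * V$0"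
  "jmap Z V $ 5 = 0" "jmap Z V $ 6 = 0" "jmap Z V $ 7 = 0"
  by (simp_all add: jmap_def inner_vec8 brk_nth axis_def algebra_simps)

lemma zpart_jmap: "zpart (jmap Z V) = 0"
  and jmap_zpart: "jmap (zpart Z) V = jmap Z V"
  by (auto simp: vec_eq_iff zpart_nth jmap_def inner_vec8 brk_nth axis_def)

text \<open>In the left trivialization \<open>W = L\<^sub>\<gamma>\<^sub>*\<^sup>-\<^sup>1 \<gamma>'\<close> the geodesic equation becomes the
  Euler equation \<open>W' = j(W) W\<close>, i.e. \<open>V' = j(Z) V\<close> and \<open>Z' = 0\<close>.\<close>
lemma geodesic_euler_equation:
  assumes "geodesic \<gamma> \<gamma>' a b" "t \<in> {a<..<b}"
  defines "W \<equiv> \<lambda>s. Linv (\<gamma> s) (\<gamma>' s)"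
  shows "(W has_vector_derivative jmap (W t) (W t)) (at t)"
proof -
  obtain \<gamma>'' where d\<gamma>: "(\<gamma> has_vector_derivative \<gamma>' t) (at t)"
    and d\<gamma>': "(\<gamma>' has_vector_derivative \<gamma>'' t) (at t)"
    and eq: "\<And>k. (\<Sum>l\<in>UNIV. gco (\<gamma> t) k l * \<gamma>'' t $ l)
           + (\<Sum>i\<in>UNIV. \<Sum>j\<in>UNIV. chr1 (\<gamma> t) i j k * \<gamma>' t $ i * \<gamma>' t $ j) = 0"
    using assms(1,2) unfolding geodesic_def by blast
  define p x W' where "p = \<gamma> t" and "x = \<gamma>' t" and "W' = Linv p (\<gamma>'' t)"
  have "((\<lambda>s. brk (\<gamma> s) (\<gamma>' s)) has_vector_derivative
      brk (\<gamma> t) (\<gamma>'' t) + brk (\<gamma>' t) (\<gamma>' t)) (at t)"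
    by (rule bounded_bilinear.has_vector_derivative[OF bounded_bilinear_brk d\<gamma> d\<gamma>'])
  then have "((\<lambda>s. \<gamma>' s - (1/2) *\<^sub>R brk (\<gamma> s) (\<gamma>' s)) has_vector_derivative
      \<gamma>'' t - (1/2) *\<^sub>R (brk (\<gamma> t) (\<gamma>'' t) + brk (\<gamma>' t) (\<gamma>' t))) (at t)"
    by (intro has_vector_derivative_diff d\<gamma>' has_vector_derivative_scaleR[of "\<lambda>_. 1/2" 0, simplified])
  then have dW: "(W has_vector_derivative W') (at t)"
    by (simp add: W_def W'_def p_def Linv_def brk_self)
  have euler: "W' $ k = W t \<bullet> brk (W t) (axis k 1)" for k
  proof -
    have eqk: "Linv p (axis k 1) \<bullet> W' = W t \<bullet> brk x (axis k 1)" for k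
      using eq[of k] by (simp add: geodesic_equation_left_trivialized W_def W'_def p_def x_def)
    have "W' $ 5 = 0" "W' $ 6 = 0" "W' $ 7 = 0"
      using eqk[of 5] eqk[of 6] eqk[of 7] by (simp_all add: inner_vec8 Linv_nth brk_nth axis_def)
    moreover have "brk x (axis k 1) = brk (W t) (axis k 1)"
      by (simp add: W_def x_def p_def vec_eq_iff brk_nth Linv_nth)
    ultimately show ?thesis
      using eqk[of k] exhaust_8[of k]
      by (auto simp: inner_vec8 Linv_nth brk_nth axis_def)
  qed
  then have "W' = jmap (W t) (W t)"
    by (simp add: jmap_def vec_eq_iff)
  with dW show ?thesis by simp
qed

lemma geodesic_vpart_velocity:
  assumes "geodesic \<gamma> \<gamma>' a b" "t \<in> {a<..<b}"
  shows "((\<lambda>s. vpart (\<gamma> s)) has_vector_derivative vpart (Linv (\<gamma> t) (\<gamma>' t))) (at t)"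
proof -
  have "(\<gamma> has_vector_derivative \<gamma>' t) (at t)"
    using assms unfolding geodesic_def by blast
  then show ?thesis
    using bounded_linear.has_vector_derivative[OF linear_vpart[THEN linear_conv_bounded_linear[THEN iffD1]]]
    by (simp add: vpart_Linv)
qed

lemma geodesic_zpart_const:
  assumes "geodesic \<gamma> \<gamma>' a b" "s \<in> {a<..<b}" "t \<in> {a<..<b}"
  shows "zpart (Linv (\<gamma> s) (\<gamma>' s)) = zpart (Linv (\<gamma> t) (\<gamma>' t))"
proof -
  have "((\<lambda>s. zpart (Linv (\<gamma> s) (\<gamma>' s))) has_vector_derivative 0) (at r within {a<..<b})"
    if "r \<in> {a<..<b}" for r
    using bounded_linear.has_vector_derivative[OF linear_zpart[THEN linear_conv_bounded_linear[THEN iffD1]]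
        geodesic_euler_equation[OF assms(1) that]]
    by (simp add: zpart_jmap has_vector_derivative_at_within)
  then obtain c where "\<And>r. r \<in> {a<..<b} \<Longrightarrow> zpart (Linv (\<gamma> r) (\<gamma>' r)) = c"
    using has_vector_derivative_zero_constant[OF convex_real_interval(8)] by blast
  then show ?thesis using assms(2,3) by simp
qed

lemma geodesic_euler_components:
  assumes "geodesic \<gamma> \<gamma>' a b" "t \<in> {a<..<b}"
  defines "W \<equiv> \<lambda>s. Linv (\<gamma> s) (\<gamma>' s)"
  shows "((\<lambda>s. W s $ 0) has_real_derivative W t $ 6 * W t $ 4 - W t $ 7 * W t $ 3) (at t)"
    "((\<lambda>s. W s $ 1) has_real_derivative W t $ 7 * W t $ 2 - W t $ 5 * W t $ 4) (at t)"
    "((\<lambda>s. W s $ 2) has_real_derivative - W t $ 7 * W t $ 1) (at t)"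
    "((\<lambda>s. W s $ 3) has_real_derivative W t $ 7 * W t $ 0) (at t)"
    "((\<lambda>s. W s $ 4) has_real_derivative W t $ 5 * W t $ 1 - W t $ 6 * W t $ 0) (at t)"
    "((\<lambda>s. W s $ 5) has_real_derivative 0) (at t)"
    "((\<lambda>s. W s $ 6) has_real_derivative 0) (at t)"
    "((\<lambda>s. W s $ 7) has_real_derivative 0) (at t)"
proof -
  have "((\<lambda>s. W s $ i) has_real_derivative jmap (W t) (W t) $ i) (at t)" for i
    using bounded_linear.has_vector_derivative[OF bounded_linear_vec_nth
        geodesic_euler_equation[OF assms(1,2), folded W_def]]
    by (simp add: has_real_derivative_iff_has_vector_derivative W_def)
  note D = this[of 0] this[of 1] this[of 2] this[of 3] this[of 4] this[of 5] this[of 6] this[of 7]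
  show "((\<lambda>s. W s $ 0) has_real_derivative W t $ 6 * W t $ 4 - W t $ 7 * W t $ 3) (at t)"
    "((\<lambda>s. W s $ 1) has_real_derivative W t $ 7 * W t $ 2 - W t $ 5 * W t $ 4) (at t)"
    "((\<lambda>s. W s $ 2) has_real_derivative - W t $ 7 * W t $ 1) (at t)"
    "((\<lambda>s. W s $ 3) has_real_derivative W t $ 7 * W t $ 0) (at t)"
    "((\<lambda>s. W s $ 4) has_real_derivative W t $ 5 * W t $ 1 - W t $ 6 * W t $ 0) (at t)"
    "((\<lambda>s. W s $ 5) has_real_derivative 0) (at t)"
    "((\<lambda>s. W s $ 6) has_real_derivative 0) (at t)"
    "((\<lambda>s. W s $ 7) has_real_derivative 0) (at t)"
    using D by (simp_all add: jmap_nth)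
qed

section \<open>First integrals\<close>

lemma first_integralI:
  assumes "\<And>\<gamma> \<gamma>' a b t. geodesic \<gamma> \<gamma>' a b \<Longrightarrow> t \<in> {a<..<b} \<Longrightarrow>
     ((\<lambda>s. F (\<gamma> s, Linv (\<gamma> s) (\<gamma>' s))) has_real_derivative 0) (at t)"
  shows "first_integral F"
  unfolding first_integral_def
proof (intro allI impI ballI)
  fix \<gamma> \<gamma>' a b s t assume g: "geodesic \<gamma> \<gamma>' a b" and st: "s \<in> {a<..<b}" "t \<in> {a<..<b}"
  obtain c where "\<forall>r\<in>{a<..<b}. F (\<gamma> r, Linv (\<gamma> r) (\<gamma>' r)) = c"
    using has_field_derivative_zero_constant[OF convex_real_interval(8)]
      assms[OF g] has_field_derivative_at_within by blast
  then show "F (\<gamma> s, Linv (\<gamma> s) (\<gamma>' s)) = F (\<gamma> t, Linv (\<gamma> t) (\<gamma>' t))"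
    using st by simp
qed

lemma first_integral_qW: "first_integral (qW W)"
  unfolding first_integral_def
proof (intro allI impI ballI)
  fix \<gamma> \<gamma>' a b s t assume "geodesic \<gamma> \<gamma>' a b" "s \<in> {a<..<b}" "t \<in> {a<..<b}"
  from geodesic_zpart_const[OF this]
  show "qW W (\<gamma> s, Linv (\<gamma> s) (\<gamma>' s)) = qW W (\<gamma> t, Linv (\<gamma> t) (\<gamma>' t))"
    by (simp add: qW_def)
qed

lemma h1_eq: "h1 = (\<lambda>(p, A). (A$0 * A$5 + A$1 * A$6)\<^sup>2 + (A$3 * A$5 - A$2 * A$6)\<^sup>2)"
  by (simp add: fun_eq_iff h1_def E1_def E2_def inner_add_right inner_basis vpart_nth c_zpart
      algebra_simps)

lemma h2_eq: "h2 = (\<lambda>(p, A). ((A$5)\<^sup>2 + (A$6)\<^sup>2 + (A$7)\<^sup>2) * (A$6 * A$0 - A$5 * A$1)\<^sup>2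
    + (A$7 * (A$2 * A$5 + A$3 * A$6) - ((A$5)\<^sup>2 + (A$6)\<^sup>2) * A$4)\<^sup>2)"
proof -
  have "(vpart A \<bullet> E3 (zpart A))\<^sup>2 = ((A$5)\<^sup>2 + (A$6)\<^sup>2 + (A$7)\<^sup>2) * (A$6 * A$0 - A$5 * A$1)\<^sup>2" for A
    by (simp add: E3_def inner_diff_right inner_basis vpart_nth c_zpart cabs_squared power_mult_distrib)
  then show ?thesis
    by (simp add: fun_eq_iff h2_def E4_def inner_add_right inner_diff_right inner_basis vpart_nth
        c_zpart algebra_simps)
qed

lemma kfun_eq: "kfun = (\<lambda>(p, A). A$2 * A$5 + A$3 * A$6 + A$4 * A$7)"
  by (simp add: fun_eq_iff kfun_def YZ_def inner_add_right inner_basis vpart_nth c_zpart algebra_simps)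

lemma first_integral_h1: "first_integral h1"
proof (rule first_integralI)
  fix \<gamma> \<gamma>' a b t assume "geodesic \<gamma> \<gamma>' a b" "t \<in> {a<..<b}"
  note D = geodesic_euler_components[OF this]
  show "((\<lambda>s. h1 (\<gamma> s, Linv (\<gamma> s) (\<gamma>' s))) has_real_derivative 0) (at t)"
    unfolding h1_eq case_prod_conv by (rule derivative_eq_intros D | simp)+ (simp add: algebra_simps)
qed

lemma first_integral_h2: "first_integral h2"
proof (rule first_integralI)
  fix \<gamma> \<gamma>' a b t assume "geodesic \<gamma> \<gamma>' a b" "t \<in> {a<..<b}"
  note D = geodesic_euler_components[OF this]
  show "((\<lambda>s. h2 (\<gamma> s, Linv (\<gamma> s) (\<gamma>' s))) has_real_derivative 0) (at t)"
    unfolding h2_eq case_prod_conv by (rule derivative_eq_intros D | simp)+ (simp add: power2_eq_square algebra_simps)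
qed

lemma first_integral_kfun: "first_integral kfun"
proof (rule first_integralI)
  fix \<gamma> \<gamma>' a b t assume "geodesic \<gamma> \<gamma>' a b" "t \<in> {a<..<b}"
  note D = geodesic_euler_components[OF this]
  show "((\<lambda>s. kfun (\<gamma> s, Linv (\<gamma> s) (\<gamma>' s))) has_real_derivative 0) (at t)"
    unfolding kfun_eq case_prod_conv by (rule derivative_eq_intros D | simp)+ (simp add: algebra_simps)
qed

lemma linear_CZ: "linear (CZ Z)"
proof (rule linearI)
  fix x y :: "real^8" and r :: real
  show "CZ Z (x + y) = CZ Z x + CZ Z y"
    unfolding CZ_def Let_def inner_add_left
    by (simp only: distrib_left diff_divide_distrib add_divide_distrib scaleR_add_left)
      (simp add: algebra_simps)
  show "CZ Z (r *\<^sub>R x) = r *\<^sub>R CZ Z x"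
    unfolding CZ_def Let_def by (simp add: algebra_simps)
qed

lemma CZ_ypart_jmap:
  assumes "ck Z \<noteq> 0"
  shows "CZ Z (ypart (jmap Z V)) = xpart V"
proof -
  define a b c where "a = Z$5" and "b = Z$6" and "c = Z$7"
  have d: "ck Z * (cabs Z)\<^sup>2 = c * (a\<^sup>2 + b\<^sup>2 + c\<^sup>2)"
    by (simp add: cabs_squared ci_def cj_def ck_def inner_basis a_def b_def c_def)
  have "c \<noteq> 0"
    using assms by (simp add: ck_def inner_basis c_def)
  moreover from this have "a\<^sup>2 + b\<^sup>2 + c\<^sup>2 \<noteq> 0"
    by (intro add_nonneg_pos[THEN less_imp_neq, THEN not_sym]) auto
  ultimately have "(- a * b * (- c * V$1) + (a\<^sup>2 + c\<^sup>2) * (c * V$0) - b * c * (a * V$1 - b * V$0))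
        / (c * (a\<^sup>2 + b\<^sup>2 + c\<^sup>2)) = V$0"
      "((- b\<^sup>2 - c\<^sup>2) * (- c * V$1) + a * b * (c * V$0) + a * c * (a * V$1 - b * V$0))
        / (c * (a\<^sup>2 + b\<^sup>2 + c\<^sup>2)) = V$1"
    by (simp_all add: divide_eq_eq) (simp_all add: algebra_simps power2_eq_square)
  then show ?thesis
    unfolding CZ_def Let_def d
    by (simp add: xpart_def inner_basis ypart_nth jmap_nth ci_def cj_def ck_def a_def b_def c_def)
qed

text \<open>Along a geodesic \<open>Z\<close> is constant, so \<open>C(Z)\<close> is a fixed linear map, and
  \<open>(v\<^sub>x - C(Z) V\<^sub>y)' = V\<^sub>x - C(Z) (j(Z) V)\<^sub>y = 0\<close>.\<close>
lemma geodesic_has_real_derivative_CZ_phase: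
  assumes g: "geodesic \<gamma> \<gamma>' a b" and r: "r \<in> {a<..<b}"
    and Z: "zpart (Linv (\<gamma> r) (\<gamma>' r)) = Z" and "ck Z \<noteq> 0"
  shows "((\<lambda>s. X \<bullet> xpart (vpart (\<gamma> s)) - X \<bullet> CZ Z (ypart (Linv (\<gamma> s) (\<gamma>' s))))
    has_real_derivative 0) (at r)"
proof -
  define W where "W = (\<lambda>s. Linv (\<gamma> s) (\<gamma>' s))"
  have bl: "bounded_linear (\<lambda>v. X \<bullet> xpart v)" "bounded_linear (\<lambda>w. X \<bullet> CZ Z (ypart w))"
    by (intro bounded_linear_compose[OF bounded_linear_inner_right] linear_conv_bounded_linear[THEN iffD1]
        linear_xpart linear_compose[OF linear_ypart linear_CZ, unfolded o_def])+
  have "((\<lambda>s. X \<bullet> xpart (vpart (\<gamma> s))) has_vector_derivative X \<bullet> xpart (vpart (W r))) (at r)"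
    using bounded_linear.has_vector_derivative[OF bl(1) geodesic_vpart_velocity[OF g r]]
    by (simp add: W_def)
  moreover have "((\<lambda>s. X \<bullet> CZ Z (ypart (W s))) has_vector_derivative
      X \<bullet> CZ Z (ypart (jmap (W r) (W r)))) (at r)"
    using bounded_linear.has_vector_derivative[OF bl(2) geodesic_euler_equation[OF g r]]
    by (simp add: W_def)
  moreover have "CZ Z (ypart (jmap (W r) (W r))) = xpart (vpart (W r))"
    using CZ_ypart_jmap[OF assms(4)] jmap_zpart[of "W r"] Z by (simp add: W_def xpart_vpart)
  ultimately show ?thesis
    unfolding W_def has_real_derivative_iff_has_vector_derivative
    using has_vector_derivative_diff by fastforce
qed

lemma first_integral_fX: "first_integral (fX X)"
  unfolding first_integral_def
proof (intro allI impI ballI)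
  fix \<gamma> \<gamma>' a b s t assume g: "geodesic \<gamma> \<gamma>' a b" and st: "s \<in> {a<..<b}" "t \<in> {a<..<b}"
  define W where "W = (\<lambda>r. Linv (\<gamma> r) (\<gamma>' r))"
  define Z where "Z = zpart (W t)"
  define \<theta> where "\<theta> = (\<lambda>r. X \<bullet> xpart (vpart (\<gamma> r)) - X \<bullet> CZ Z (ypart (W r)))"
  have Z: "zpart (W r) = Z" if "r \<in> {a<..<b}" for r
    using geodesic_zpart_const[OF g that st(2)] by (simp add: W_def Z_def)
  have f: "fX X (\<gamma> r, W r) = (if ck Z = 0 then 0 else Phi Z * sin (2 * pi * \<theta> r))"
    if "r \<in> {a<..<b}" for r
    using Z[OF that] by (simp add: fX_def \<theta>_def ypart_vpart inner_diff_right)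
  show "fX X (\<gamma> s, Linv (\<gamma> s) (\<gamma>' s)) = fX X (\<gamma> t, Linv (\<gamma> t) (\<gamma>' t))"
  proof (cases "ck Z = 0")
    case True
    then show ?thesis using f[OF st(1)] f[OF st(2)] by (simp add: W_def)
  next
    case False
    have "(\<theta> has_real_derivative 0) (at r within {a<..<b})" if "r \<in> {a<..<b}" for r
      using geodesic_has_real_derivative_CZ_phase[OF g that _ False, of X] Z[OF that]
      by (simp add: \<theta>_def W_def has_field_derivative_at_within)
    then obtain c where "\<forall>r\<in>{a<..<b}. \<theta> r = c"
      using has_field_derivative_zero_constant[OF convex_real_interval(8)] by blast
    then show ?thesis using f[OF st(1)] f[OF st(2)] st by (simp add: W_def)
  qed
qed

section \<open>Invariance under \<open>\<Gamma>\<close>\<close>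

lemma Gamma_invariant_fibrewise: "Gamma_invariant (\<lambda>(p, A). G A)"
  by (simp add: Gamma_invariant_def)

lemma xpart_nmult: "xpart (nmult g p) = xpart g + xpart p"
  by (simp add: nmult_def vec_eq_iff xpart_nth brk_nth)

lemma sin_2pi_add_Ints: "n \<in> \<int> \<Longrightarrow> sin (2 * pi * (n + x)) = sin (2 * pi * x)"
  by (simp add: distrib_left sin_add sin_integer_2pi cos_integer_2pi)

lemma Gamma_invariant_fX:
  assumes "\<And>g. g \<in> Gamma \<Longrightarrow> X \<bullet> xpart g \<in> \<int>"
  shows "Gamma_invariant (fX X)"
  unfolding Gamma_invariant_def
proof (intro ballI allI)
  fix g p A assume "g \<in> Gamma"
  then have "sin (2 * pi * (X \<bullet> xpart g + y)) = sin (2 * pi * y)" for y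
    using assms sin_2pi_add_Ints by blast
  then show "fX X (nmult g p, A) = fX X (p, A)"
    by (simp add: fX_def Let_def xpart_vpart xpart_nmult add_diff_eq[symmetric] inner_add_right)
qed

lemma Gamma_nth_Ints: "g \<in> Gamma \<Longrightarrow> g$0 \<in> \<int> \<and> g$1 \<in> \<int>"
  by (auto simp: Gamma_def basis_defs axis_def)

lemma Gamma_invariant_fXi: "Gamma_invariant (fX Xi)"
  and Gamma_invariant_fXj: "Gamma_invariant (fX Xj)"
  using Gamma_nth_Ints
  by (auto intro!: Gamma_invariant_fX simp: inner_commute[of _ "xpart _"] inner_basis xpart_nth)

section \<open>Smoothness\<close>

lemma real_polynomial_function_has_derivative:
  assumes "real_polynomial_function f"
  obtains D where "\<And>x. (f has_derivative D x) (at x)" "\<And>h. real_polynomial_function (\<lambda>x. D x h)"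
proof -
  from assms have "\<exists>D. (\<forall>x. (f has_derivative D x) (at x)) \<and> (\<forall>h. real_polynomial_function (\<lambda>x. D x h))"
  proof induction
    case (linear f)
    then show ?case by (intro exI[of _ "\<lambda>x. f"]) (auto intro: bounded_linear_imp_has_derivative)
  next
    case (const c)
    show ?case by (intro exI[of _ "\<lambda>x h. 0"]) auto
  next
    case (add f g)
    then obtain Df Dg where "\<forall>x. (f has_derivative Df x) (at x)" "\<forall>h. real_polynomial_function (\<lambda>x. Df x h)"
      "\<forall>x. (g has_derivative Dg x) (at x)" "\<forall>h. real_polynomial_function (\<lambda>x. Dg x h)" by blast
    then show ?case
      by (intro exI[of _ "\<lambda>x h. Df x h + Dg x h"]) (auto intro: has_derivative_add)
  next
    case (mult f g)
    then obtain Df Dg where "\<forall>x. (f has_derivative Df x) (at x)" "\<forall>h. real_polynomial_function (\<lambda>x. Df x h)"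
      "\<forall>x. (g has_derivative Dg x) (at x)" "\<forall>h. real_polynomial_function (\<lambda>x. Dg x h)" by blast
    with mult.hyps show ?case
      by (intro exI[of _ "\<lambda>x h. f x * Dg x h + Df x h * g x"]) (auto intro!: has_derivative_mult real_polynomial_function.intros(3,4))
  qed
  with that show ?thesis by blast
qed

lemma continuous_on_real_polynomial_function:
  "real_polynomial_function f \<Longrightarrow> continuous_on S f"
  by (simp add: continuous_at_imp_continuous_on continuous_real_polymonial_function)

lemma Ck_real_polynomial_function:
  fixes f :: "'a::euclidean_space \<Rightarrow> real"
  shows "real_polynomial_function f \<Longrightarrow> Ck n f"
proof (induction n arbitrary: f)
  case 0
  then show ?case by (simp add: continuous_on_real_polynomial_function)
next
  case (Suc n)
  then obtain D where D: "\<And>x. (f has_derivative D x) (at x)" "\<And>h. real_polynomial_function (\<lambda>x. D x h)"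
    using real_polynomial_function_has_derivative by blast
  then have "frechet_derivative f (at x) = D x" for x
    by (metis frechet_derivative_at)
  with D Suc.IH show ?case
    by (auto simp: differentiable_on_def differentiable_def)
qed

lemma smooth_real_polynomial_function:
  "real_polynomial_function f \<Longrightarrow> smooth (f :: 'a::euclidean_space \<Rightarrow> real)"
  by (simp add: smooth_def Ck_real_polynomial_function)

lemma real_polynomial_function_nth:
  "real_polynomial_function (\<lambda>x::(real^'n) \<times> (real^'m). fst x $ i)"
  "real_polynomial_function (\<lambda>x::(real^'n) \<times> (real^'m). snd x $ j)"
  by (auto intro!: real_polynomial_function.intros(1) bounded_linear_compose[OF bounded_linear_vec_nth]
      bounded_linear_fst bounded_linear_snd)

lemmas real_polynomial_function_intros =
  real_polynomial_function.intros(2-4)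
  real_polynomial_function_diff real_polynomial_function_minus real_polynomial_function_power
  real_polynomial_function_nth

lemma smooth_qW: "smooth (qW W)"
proof -
  have "bounded_linear (\<lambda>x::(real^8) \<times> (real^8). zpart (snd x) \<bullet> W)"
    by (intro bounded_linear_compose[OF bounded_linear_inner_left] bounded_linear_compose[OF _ bounded_linear_snd]
        linear_conv_bounded_linear[THEN iffD1] linear_zpart)
  then show ?thesis
    by (simp add: qW_def case_prod_beta' smooth_real_polynomial_function real_polynomial_function.intros(1))
qed

lemma smooth_h1: "smooth h1"
  and smooth_h2: "smooth h2"
  and smooth_kfun: "smooth kfun"
  unfolding h1_eq h2_eq kfun_eq case_prod_beta'
  by (intro smooth_real_polynomial_function real_polynomial_function_intros)+

lemma phi_nonneg: "phi t \<ge> 0"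
  by (simp add: phi_def)

lemma has_real_derivative_phi:
  assumes "t \<noteq> 0"
  shows "(phi has_real_derivative phi t * (2 / t ^ 3)) (at t)"
proof -
  have "((\<lambda>t. exp (- 1 / t\<^sup>2)) has_real_derivative exp (- 1 / t\<^sup>2) * (2 / t ^ 3)) (at t)"
    using assms by (auto intro!: derivative_eq_intros simp: field_simps power2_eq_square power3_eq_cube)
  then have "(phi has_real_derivative exp (- 1 / t\<^sup>2) * (2 / t ^ 3)) (at t)"
    by (rule has_field_derivative_transform_within_open[where S = "- {0}"])
      (use assms in \<open>auto simp: phi_def\<close>)
  with assms show ?thesis by (simp add: phi_def)
qed

lemma has_derivative_phi_comp:
  fixes u :: "'a::real_normed_vector \<Rightarrow> real"
  assumes "u x \<noteq> 0" "(u has_derivative Du) (at x)"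
  shows "((\<lambda>y. phi (u y)) has_derivative (\<lambda>h. Du h * (phi (u x) * (2 / u x ^ 3)))) (at x)"
  using DERIV_compose_FDERIV[OF has_real_derivative_phi[OF assms(1)] assms(2)] .

lemma power_div_fact_le_exp:
  assumes "(x::real) \<ge> 0"
  shows "x ^ n / fact n \<le> exp x"
proof -
  have "x ^ n / fact n \<le> (\<Sum>k<Suc n. x ^ k /\<^sub>R fact k)"
    using assms by (simp add: divide_inverse_commute[symmetric] sum_nonneg)
  also have "\<dots> \<le> (\<Sum>k. x ^ k /\<^sub>R fact k)"
    by (rule sum_le_suminf[OF summable_exp_generic]) (use assms in auto)
  also have "\<dots> = exp x" by (simp add: exp_def)
  finally show ?thesis .
qed

lemma phi_div_power_le:
  assumes "t \<noteq> 0" "\<bar>t\<bar> \<le> 1"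
  shows "phi t / \<bar>t\<bar> ^ m \<le> fact (Suc m) * t\<^sup>2"
proof -
  define y where "y = 1 / t\<^sup>2"
  have y: "y > 0" using assms by (simp add: y_def)
  have "y ^ Suc m \<le> fact (Suc m) * exp y"
    using power_div_fact_le_exp[of y "Suc m"] y by (simp add: divide_le_eq mult.commute)
  then have "exp (- y) \<le> fact (Suc m) / y ^ Suc m"
    using y by (simp add: exp_minus field_simps)
  also have "\<dots> = fact (Suc m) * (t\<^sup>2) ^ Suc m"
    by (simp add: y_def power_one_over)
  also have "(t\<^sup>2) ^ Suc m = \<bar>t\<bar> ^ m * \<bar>t\<bar> ^ (m + 2)"
  proof -
    have "2 * Suc m = m + (m + 2)" by simp
    then show ?thesis by (metis power2_abs power_add power_mult)
  qed
  finally have "phi t / \<bar>t\<bar> ^ m \<le> fact (Suc m) * \<bar>t\<bar> ^ (m + 2)"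
    using assms by (simp add: phi_def y_def field_simps)
  also have "\<dots> \<le> fact (Suc m) * \<bar>t\<bar>\<^sup>2"
    by (intro mult_left_mono power_decreasing) (use assms in auto)
  finally show ?thesis by simp
qed

lemma has_derivative_zero_if_quadratic_bound:
  fixes f g :: "'a::real_normed_vector \<Rightarrow> real"
  assumes "f x = 0" "g x = 0" "(g has_derivative Dg) (at x)"
    and "\<forall>\<^sub>F y in at x. \<bar>f y\<bar> \<le> M * (g y)\<^sup>2"
  shows "(f has_derivative (\<lambda>h. 0)) (at x)"
proof -
  have "((\<lambda>y. M * (g y)\<^sup>2) has_derivative (\<lambda>h. 0)) (at x)"
    using assms(2,3) by (auto intro!: derivative_eq_intros)
  then have upper: "((\<lambda>y. \<bar>M * (g y)\<^sup>2\<bar> / norm (y - x)) \<longlongrightarrow> 0) (at x)"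
    using assms(2) unfolding has_derivative_iff_norm by simp
  have "((\<lambda>y. \<bar>f y\<bar> / norm (y - x)) \<longlongrightarrow> 0) (at x)"
    by (rule real_tendsto_sandwich[OF _ _ tendsto_const upper])
      (use assms(4) in \<open>auto elim!: eventually_mono intro: divide_right_mono\<close>)
  then show ?thesis
    using assms(1) unfolding has_derivative_iff_norm by simp
qed

definition flat_wave ::
  "('a \<Rightarrow> real) \<Rightarrow> ('a \<Rightarrow> real) \<Rightarrow> ('a \<Rightarrow> real) \<Rightarrow> ('a \<Rightarrow> real) \<Rightarrow> ('a \<Rightarrow> real) \<Rightarrow> nat \<Rightarrow> 'a \<Rightarrow> real"
  where "flat_wave u \<alpha> Q P R m x = (if u x = 0 then 0 else
     phi (u x) * (P x * sin (\<alpha> x + Q x / u x) + R x * cos (\<alpha> x + Q x / u x)) / u x ^ m)"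

lemma flat_wave_has_derivative_zero:
  fixes u :: "'a::real_normed_vector \<Rightarrow> real"
  assumes "u x = 0" "(u has_derivative Du) (at x)" "continuous (at x) u"
    "continuous (at x) P" "continuous (at x) R"
  shows "(flat_wave u \<alpha> Q P R m has_derivative (\<lambda>h. 0)) (at x)"
proof (rule has_derivative_zero_if_quadratic_bound[OF _ assms(1,2)])
  show "flat_wave u \<alpha> Q P R m x = 0" by (simp add: flat_wave_def assms(1))
  have "\<forall>\<^sub>F y in at x. \<bar>u y - u x\<bar> < 1 \<and> \<bar>P y - P x\<bar> < 1 \<and> \<bar>R y - R x\<bar> < 1"
    using assms(3-5) unfolding continuous_at
    by (intro eventually_conj) (auto dest!: tendstoD[where e=1] simp: dist_real_def)
  then show "\<forall>\<^sub>F y in at x. \<bar>flat_wave u \<alpha> Q P R m y\<bar> \<le> fact (Suc m) * (\<bar>P x\<bar> + \<bar>R x\<bar> + 2) * (u y)\<^sup>2"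
  proof (rule eventually_mono, safe)
    fix y assume near: "\<bar>u y - u x\<bar> < 1" "\<bar>P y - P x\<bar> < 1" "\<bar>R y - R x\<bar> < 1"
    define \<theta> where "\<theta> = \<alpha> y + Q y / u y"
    have wave: "\<bar>P y * sin \<theta> + R y * cos \<theta>\<bar> \<le> \<bar>P x\<bar> + \<bar>R x\<bar> + 2"
    proof -
      have "\<bar>P y * sin \<theta> + R y * cos \<theta>\<bar> \<le> \<bar>P y\<bar> * \<bar>sin \<theta>\<bar> + \<bar>R y\<bar> * \<bar>cos \<theta>\<bar>"
        by (metis abs_mult abs_triangle_ineq)
      also have "\<dots> \<le> \<bar>P y\<bar> + \<bar>R y\<bar>"
        by (intro add_mono mult_right_le_one_le) auto
      finally show ?thesis using near by linarith
    qed
    show "\<bar>flat_wave u \<alpha> Q P R m y\<bar> \<le> fact (Suc m) * (\<bar>P x\<bar> + \<bar>R x\<bar> + 2) * (u y)\<^sup>2"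
    proof (cases "u y = 0")
      case False
      have "\<bar>flat_wave u \<alpha> Q P R m y\<bar> = phi (u y) / \<bar>u y\<bar> ^ m * \<bar>P y * sin \<theta> + R y * cos \<theta>\<bar>"
        using False phi_nonneg[of "u y"] by (simp add: flat_wave_def \<theta>_def abs_mult abs_divide power_abs)
      also have "\<dots> \<le> (fact (Suc m) * (u y)\<^sup>2) * (\<bar>P x\<bar> + \<bar>R x\<bar> + 2)"
        using near assms(1) by (intro mult_mono phi_div_power_le False wave) (auto simp: phi_nonneg)
      finally show ?thesis by (simp add: ac_simps)
    qed (simp add: flat_wave_def)
  qed
qed

lemma flat_wave_derivative_algebra:
  fixes u ph P R s c Du D\<alpha> DQ DP DR Q :: real
  assumes "u \<noteq> 0"
  defines "T \<equiv> u ^ 3 * D\<alpha> + u ^ 2 * DQ - u * Q * Du"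
  shows "(ph * (P * ((D\<alpha> + (DQ / u - Q * (inverse u * Du * inverse u))) * c) + DP * s
        + (DR * c - R * ((D\<alpha> + (DQ / u - Q * (inverse u * Du * inverse u))) * s)))
      + Du * (ph * 2) * (P * s + R * c) / u ^ 3) / u ^ m
    - ph * (P * s + R * c) * (inverse (u ^ m) * (real m * Du * u ^ (m - Suc 0)) * inverse (u ^ m))
    = ph * ((2 * Du * P + u ^ 3 * DP - real m * u ^ 2 * Du * P - R * T) * s
      + (2 * Du * R + u ^ 3 * DR - real m * u ^ 2 * Du * R + P * T) * c) / u ^ (m + 3)"
proof (cases m)
  case 0
  with assms(1) show ?thesis by (simp add: T_def field_simps power2_eq_square power3_eq_cube)
next
  case (Suc k)
  with assms(1) show ?thesis
    by (simp add: T_def field_simps power_add eval_nat_numeral)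
qed

lemma flat_wave_has_derivative_nonzero:
  fixes u :: "'a::real_normed_vector \<Rightarrow> real"
  assumes ux: "u x \<noteq> 0" and cu: "continuous_on UNIV u"
    and Du: "(u has_derivative Du) (at x)" and D\<alpha>: "(\<alpha> has_derivative D\<alpha>) (at x)"
    and DQ: "(Q has_derivative DQ) (at x)" and DP: "(P has_derivative DP) (at x)"
    and DR: "(R has_derivative DR) (at x)"
  defines "T \<equiv> \<lambda>h. u x ^ 3 * D\<alpha> h + u x ^ 2 * DQ h - u x * Q x * Du h"
  shows "(flat_wave u \<alpha> Q P R m has_derivative (\<lambda>h. flat_wave u \<alpha> Q
      (\<lambda>_. 2 * Du h * P x + u x ^ 3 * DP h - real m * u x ^ 2 * Du h * P x - R x * T h)
      (\<lambda>_. 2 * Du h * R x + u x ^ 3 * DR h - real m * u x ^ 2 * Du h * R x + P x * T h) (m + 3) x)) (at x)"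
proof -
  define F where "F = (\<lambda>y. phi (u y) * (P y * sin (\<alpha> y + Q y / u y) + R y * cos (\<alpha> y + Q y / u y)) / u y ^ m)"
  have "(F has_derivative (\<lambda>h. flat_wave u \<alpha> Q
      (\<lambda>_. 2 * Du h * P x + u x ^ 3 * DP h - real m * u x ^ 2 * Du h * P x - R x * T h)
      (\<lambda>_. 2 * Du h * R x + u x ^ 3 * DR h - real m * u x ^ 2 * Du h * R x + P x * T h) (m + 3) x)) (at x)"
    unfolding F_def
    by (rule derivative_eq_intros has_derivative_phi_comp[OF ux Du] Du D\<alpha> DQ DP DR refl | simp add: ux)+
      (intro ext, subst flat_wave_derivative_algebra[OF ux], simp add: ux flat_wave_def T_def)
  moreover have "open {y. u y \<noteq> 0}"
    using cu by (simp add: open_Collect_neq continuous_on_const)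
  ultimately show ?thesis
    by (rule has_derivative_transform_within_open) (use ux in \<open>auto simp: F_def flat_wave_def\<close>)
qed

lemma flat_wave_has_derivative:
  fixes u :: "'a::real_normed_vector \<Rightarrow> real"
  assumes "real_polynomial_function u" "real_polynomial_function \<alpha>" "real_polynomial_function Q"
    "real_polynomial_function P" "real_polynomial_function R"
  obtains P' R' where
    "\<And>x. (flat_wave u \<alpha> Q P R m has_derivative (\<lambda>h. flat_wave u \<alpha> Q (P' h) (R' h) (m + 3) x)) (at x)"
    "\<And>h. real_polynomial_function (P' h)" "\<And>h. real_polynomial_function (R' h)"
proof -
  obtain Du D\<alpha> DQ DP DR where D:
    "\<And>x. (u has_derivative Du x) (at x)" "\<And>h. real_polynomial_function (\<lambda>x. Du x h)"
    "\<And>x. (\<alpha> has_derivative D\<alpha> x) (at x)" "\<And>h. real_polynomial_function (\<lambda>x. D\<alpha> x h)"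
    "\<And>x. (Q has_derivative DQ x) (at x)" "\<And>h. real_polynomial_function (\<lambda>x. DQ x h)"
    "\<And>x. (P has_derivative DP x) (at x)" "\<And>h. real_polynomial_function (\<lambda>x. DP x h)"
    "\<And>x. (R has_derivative DR x) (at x)" "\<And>h. real_polynomial_function (\<lambda>x. DR x h)"
    using assms by (metis real_polynomial_function_has_derivative)
  define T where "T = (\<lambda>h y. u y ^ 3 * D\<alpha> y h + u y ^ 2 * DQ y h - u y * Q y * Du y h)"
  define P' where "P' = (\<lambda>h y. 2 * Du y h * P y + u y ^ 3 * DP y h - real m * u y ^ 2 * Du y h * P y - R y * T h y)"
  define R' where "R' = (\<lambda>h y. 2 * Du y h * R y + u y ^ 3 * DR y h - real m * u y ^ 2 * Du y h * R y + P y * T h y)"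
  show ?thesis
  proof
    fix x
    show "(flat_wave u \<alpha> Q P R m has_derivative (\<lambda>h. flat_wave u \<alpha> Q (P' h) (R' h) (m + 3) x)) (at x)"
    proof (cases "u x = 0")
      case True
      then show ?thesis
        using flat_wave_has_derivative_zero[OF True D(1) continuous_real_polymonial_function
            continuous_real_polymonial_function continuous_real_polymonial_function] assms(1,4,5)
        by (simp add: flat_wave_def)
    next
      case False
      then show ?thesis
        using flat_wave_has_derivative_nonzero[OF False continuous_on_real_polynomial_function[OF assms(1)]
            D(1,3,5,7,9), of m]
        by (simp add: flat_wave_def P'_def R'_def T_def)
    qed
  next
    show "real_polynomial_function (P' h)" "real_polynomial_function (R' h)" for h
      unfolding P'_def R'_def T_def
      by (intro real_polynomial_function_intros assms D)+
  qed
qed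

lemma Ck_flat_wave:
  fixes u :: "'a::euclidean_space \<Rightarrow> real"
  assumes "real_polynomial_function u" "real_polynomial_function \<alpha>" "real_polynomial_function Q"
  shows "real_polynomial_function P \<Longrightarrow> real_polynomial_function R \<Longrightarrow> Ck n (flat_wave u \<alpha> Q P R m)"
proof (induction n arbitrary: P R m)
  case 0
  obtain P' R' where D:
    "\<And>x. (flat_wave u \<alpha> Q P R m has_derivative (\<lambda>h. flat_wave u \<alpha> Q (P' h) (R' h) (m + 3) x)) (at x)"
    "\<And>h. real_polynomial_function (P' h)" "\<And>h. real_polynomial_function (R' h)"
    using flat_wave_has_derivative[OF assms 0, where m = m] by blast
  have "isCont (flat_wave u \<alpha> Q P R m) x" for x
    by (rule has_derivative_continuous[OF D(1)])
  then show ?case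
    by (simp add: continuous_at_imp_continuous_on)
next
  case (Suc n)
  obtain P' R' where D:
    "\<And>x. (flat_wave u \<alpha> Q P R m has_derivative (\<lambda>h. flat_wave u \<alpha> Q (P' h) (R' h) (m + 3) x)) (at x)"
    "\<And>h. real_polynomial_function (P' h)" "\<And>h. real_polynomial_function (R' h)"
    using flat_wave_has_derivative[OF assms Suc.prems, where m = m] by blast
  have "(\<lambda>x. frechet_derivative (flat_wave u \<alpha> Q P R m) (at x) b) = flat_wave u \<alpha> Q (P' b) (R' b) (m + 3)"
    for b by (simp add: fun_eq_iff frechet_derivative_at[OF D(1), symmetric])
  moreover have "flat_wave u \<alpha> Q P R m differentiable_on UNIV"
    using D(1) by (auto simp: differentiable_on_def differentiable_def)
  ultimately show ?case
    using Suc.IH[OF D(2,3)] by simp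
qed

lemma inner_CZ:
  "X \<bullet> CZ Z W = (X$0 * (- ci Z * cj Z * W$2 + ((ci Z)\<^sup>2 + (ck Z)\<^sup>2) * W$3 - cj Z * ck Z * W$4)
    + X$1 * ((- (cj Z)\<^sup>2 - (ck Z)\<^sup>2) * W$2 + ci Z * cj Z * W$3 + ci Z * ck Z * W$4))
    / (ck Z * (cabs Z)\<^sup>2)"
  by (simp add: CZ_def Let_def inner_add_right inner_commute[of X] inner_basis add_divide_distrib
      diff_divide_distrib algebra_simps)

lemma inner_xpart: "X \<bullet> xpart p = X$0 * p$0 + X$1 * p$1"
  by (simp add: inner_vec8 xpart_nth)

lemma smooth_fX: "smooth (fX X)"
proof -
  define u where "u = (\<lambda>(p::real^8, A::real^8). A$7 * ((A$5)\<^sup>2 + (A$6)\<^sup>2 + (A$7)\<^sup>2))"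
  define \<alpha> where "\<alpha> = (\<lambda>(p::real^8, A::real^8). 2 * pi * (X$0 * p$0 + X$1 * p$1))"
  define Q where "Q = (\<lambda>(p::real^8, A::real^8). - 2 * pi *
    (X$0 * (- A$5 * A$6 * A$2 + ((A$5)\<^sup>2 + (A$7)\<^sup>2) * A$3 - A$6 * A$7 * A$4)
     + X$1 * ((- (A$6)\<^sup>2 - (A$7)\<^sup>2) * A$2 + A$5 * A$6 * A$3 + A$5 * A$7 * A$4)))"
  have "fX X = flat_wave u \<alpha> Q (\<lambda>_. 1) (\<lambda>_. 0) 0"
  proof (rule ext, clarify)
    fix p A :: "real^8"
    have d: "ck (zpart A) * (cabs (zpart A))\<^sup>2 = u (p, A)"
      by (simp add: u_def c_zpart cabs_squared)
    have u0: "u (p, A) = 0 \<longleftrightarrow> A$7 = 0"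
      by (auto simp: u_def add_nonneg_eq_0_iff)
    show "fX X (p, A) = flat_wave u \<alpha> Q (\<lambda>_. 1) (\<lambda>_. 0) 0 (p, A)"
    proof (cases "A$7 = 0")
      case False
      then have "u (p, A) \<noteq> 0" using u0 by simp
      then have "2 * pi * (X \<bullet> (xpart (vpart p) - CZ (zpart A) (ypart (vpart A))))
          = \<alpha> (p, A) + Q (p, A) / u (p, A)"
        unfolding inner_diff_right inner_CZ d
        by (simp add: \<alpha>_def Q_def inner_xpart xpart_vpart ypart_vpart ypart_nth c_zpart field_simps)
      with False show ?thesis
        by (simp add: fX_def flat_wave_def Phi_def d[unfolded c_zpart] c_zpart u0)
    qed (simp add: fX_def flat_wave_def c_zpart u0)
  qed
  moreover have "real_polynomial_function u" "real_polynomial_function \<alpha>" "real_polynomial_function Q"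
    unfolding u_def \<alpha>_def Q_def case_prod_beta' by (intro real_polynomial_function_intros)+
  ultimately show ?thesis
    unfolding smooth_def using Ck_flat_wave real_polynomial_function.intros(2) by metis
qed

theorem lemma4p4:
  assumes "F \<in> {qW Zi, qW Zj, qW Zk, h1, h2, kfun, fX Xi, fX Xj}"
  shows "smooth F \<and> first_integral F \<and> Gamma_invariant F"
proof -
  have "Gamma_invariant (qW W)" "Gamma_invariant h1" "Gamma_invariant h2" "Gamma_invariant kfun" for W
    unfolding qW_def h1_def h2_def kfun_def by (rule Gamma_invariant_fibrewise)+
  with assms show ?thesis
    by (auto simp: smooth_qW smooth_h1 smooth_h2 smooth_kfun smooth_fX
        first_integral_qW first_integral_h1 first_integral_h2 first_integral_kfun first_integral_fX
        Gamma_invariant_fXi Gamma_invariant_fXj)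
qed

end
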